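(* Let $(X,d)$ and $(\Lambda,\rho)$ be compact metric spaces and $\omega:\Lambda\times X\to X$ continuous. Let $\mu_1,\mu_2$ be Borel probability measures on $\Omega\times X$ invariant under the skew product $\Phi$, and let $\nu$ be a Borel probability measure on $\Omega$ with $\nu(F)=1$ and $\pi_*(\mu_1)=\pi_*(\mu_2)=\nu$. Then $\mu_1=\mu_2$.
   Context: $\omega_\lambda(x)=\omega(\lambda,x)$. $\Omega=\Lambda^{\mathbb{N}}$ with the product topology; $\beta:\Omega\to\Omega$ is the shift $\beta(\sigma_1,\sigma_2,\dots)=(\sigma_2,\sigma_3,\dots)$. The skew product is $\Phi:\Omega\times X\to\Omega\times X$, $\Phi(\sigma,x)=(\beta(\sigma),\omega_{\sigma_1}(x))$, and $\pi:\Omega\times X\to\Omega$ is $\pi(\sigma,x)=\sigma$. $F=\{\sigma\in\Omega:\lim_{n\to\infty}\frac1n\sum_{i=1}^n\operatorname{Diam}(\omega_{\sigma_i}\circ\cdots\circ\omega_{\sigma_1}(X))=0\}$, with $\operatorname{Diam}(A)=\sup\{d(x,y):x,y\in A\}$. *)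

theory Defs
  imports "HOL-Probability.Probability"
begin

text \<open>Sequences sigma = (sigma_1, sigma_2, ...) in Omega = Lambda^N are represented as
  functions nat => Lambda, with sigma_{i+1} = sigma i (0-based indexing).\<close>

definition shift :: "(nat \<Rightarrow> 'l) \<Rightarrow> (nat \<Rightarrow> 'l)" where
  "shift \<sigma> = (\<lambda>n. \<sigma> (Suc n))"

definition skew :: "('l \<Rightarrow> 'x \<Rightarrow> 'x) \<Rightarrow> (nat \<Rightarrow> 'l) \<times> 'x \<Rightarrow> (nat \<Rightarrow> 'l) \<times> 'x" where
  "skew \<omega> p = (shift (fst p), \<omega> (fst p 0) (snd p))"

primrec iter_comp :: "('l \<Rightarrow> 'x \<Rightarrow> 'x) \<Rightarrow> (nat \<Rightarrow> 'l) \<Rightarrow> nat \<Rightarrow> 'x \<Rightarrow> 'x" where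
  "iter_comp \<omega> \<sigma> 0 = id"
| "iter_comp \<omega> \<sigma> (Suc n) = \<omega> (\<sigma> n) \<circ> iter_comp \<omega> \<sigma> n"

definition Fset :: "('l \<Rightarrow> 'x::metric_space \<Rightarrow> 'x) \<Rightarrow> (nat \<Rightarrow> 'l) set" where
  "Fset \<omega> = {\<sigma>. (\<lambda>n. (\<Sum>i=1..n. diameter (range (iter_comp \<omega> \<sigma> i))) / real n)
                     \<longlonglongrightarrow> 0}"

end

theory Submission
  imports Defs
begin

(*
  Invariance gives \<integral>g d\<mu> = \<integral>g \<circ> \<Phi>\<^sup>n d\<mu> for every n. Over \<sigma> \<in> F the fibre maps contract on
  average, so \<Phi>\<^sup>n(\<sigma>, x) and \<Phi>\<^sup>n(\<sigma>, x\<^sub>0) are close in Cesaro mean; for Lipschitz g, dominated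
  convergence then shows that \<integral>g d\<mu> is the Cesaro limit of \<integral>g(\<Phi>\<^sup>n(\<sigma>, x\<^sub>0)) d\<nu>(\<sigma>), a quantity
  depending only on \<nu>. Bounded Lipschitz functions approximate indicators of closed sets, hence
  determine a finite Borel measure.
*)

lemma borel_measurable_continuous_on_sets_borel:
  assumes "sets M = sets borel" and "continuous_on UNIV f"
  shows "f \<in> borel_measurable M"
  using borel_measurable_continuous_onI[OF assms(2)] by (simp add: measurable_cong_sets[OF assms(1) refl])

lemma integrable_bounded_continuous_on:
  fixes f :: "'a::topological_space \<Rightarrow> 'b::{banach, second_countable_topology}"
  assumes "sets M = sets borel" and "finite_measure M"
    and "continuous_on UNIV f" and "\<And>x. norm (f x) \<le> B"
  shows "integrable M f"
  using assms
  by (intro finite_measure.integrable_const_bound[where B = B] AE_I2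
      borel_measurable_continuous_on_sets_borel)

lemma distr_eq_if_emeasure_vimage_eq:
  assumes "T \<in> borel_measurable M" and "sets M = sets borel"
    and "\<forall>A \<in> sets borel. emeasure M (T -` A) = emeasure M A"
  shows "distr M borel T = M"
proof (rule measure_eqI)
  have space: "space M = UNIV"
    using sets_eq_imp_space_eq[OF assms(2)] by simp
  fix A assume "A \<in> sets (distr M borel T)"
  then have "A \<in> sets borel" by simp
  then show "emeasure (distr M borel T) A = emeasure M A"
    using assms(3) emeasure_distr[OF assms(1)] space by simp
qed (use assms(2) in simp)

lemma integral_funpow_invariant:
  fixes g :: "'a::topological_space \<Rightarrow> 'b::{banach, second_countable_topology}"
  assumes "sets M = sets borel" and T: "T \<in> borel_measurable borel"
    and inv: "distr M borel T = M" and g: "g \<in> borel_measurable borel"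
  shows "(\<integral>x. g ((T ^^ n) x) \<partial>M) = integral\<^sup>L M g"
proof -
  have Tn: "T ^^ n \<in> borel_measurable M" for n
    using measurable_compose_n[OF T] by (simp add: measurable_cong_sets[OF assms(1) refl])
  have "distr M borel (T ^^ n) = M"
  proof (induction n)
    case 0
    then show ?case by (simp add: assms(1) distr_id2 sets_eq_imp_space_eq)
  next
    case (Suc n)
    have "distr M borel (T ^^ Suc n) = distr (distr M borel (T ^^ n)) borel T"
      by (simp add: distr_distr[OF T Tn] comp_def)
    also have "\<dots> = M"
      using Suc inv by simp
    finally show ?case .
  qed
  then show ?thesis
    using integral_distr[OF Tn g, of n] by simp
qed

lemma AE_in_if_distr_emeasure_eq_1:
  assumes "f \<in> measurable M N" and "prob_space (distr M N f)" and "emeasure (distr M N f) A = 1"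
  shows "AE x in M. f x \<in> A"
proof -
  have A: "A \<in> sets N"
    using assms(3) by (metis emeasure_notin_sets sets_distr zero_neq_one)
  then have "AE x in distr M N f. x \<in> A"
    using prob_space.AE_in_set_eq_1[OF assms(2)] assms(3) by (simp add: measure_def)
  with A show ?thesis
    by (subst (asm) AE_distr_iff[OF assms(1)]) (simp_all add: Int_absorb2 sets.sets_into_space)
qed

lemma abs_average_le:
  fixes f :: "nat \<Rightarrow> real"
  assumes "\<And>n. \<bar>f n\<bar> \<le> D"
  shows "\<bar>(\<Sum>n=1..N. f n) / real N\<bar> \<le> D"
proof (cases "N = 0")
  case True
  then show ?thesis using assms[of 0] by simp
next
  case False
  have "\<bar>\<Sum>n=1..N. f n\<bar> \<le> (\<Sum>n=1..N. D)"
    by (rule order_trans[OF sum_abs sum_mono[OF assms]])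
  with False show ?thesis
    by (simp add: abs_divide field_simps)
qed

lemma integral_average_tendsto_zero:
  fixes f :: "nat \<Rightarrow> 'a \<Rightarrow> real"
  assumes "finite_measure M" and f: "\<And>n. f n \<in> borel_measurable M"
    and bound: "\<And>n x. \<bar>f n x\<bar> \<le> D"
    and lim: "AE x in M. (\<lambda>N. (\<Sum>n=1..N. f n x) / real N) \<longlonglongrightarrow> 0"
  shows "(\<lambda>N. (\<Sum>n=1..N. integral\<^sup>L M (f n)) / real N) \<longlonglongrightarrow> 0"
proof -
  interpret finite_measure M by fact
  have int: "integrable M (f n)" for n
    using bound by (intro integrable_const_bound[where B = D] AE_I2 f) simp
  have "(\<lambda>N. \<integral>x. (\<Sum>n=1..N. f n x) / real N \<partial>M) \<longlonglongrightarrow> (\<integral>x. 0 \<partial>M)"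
  proof (rule integral_dominated_convergence[where w = "\<lambda>_. D"])
    show "AE x in M. norm ((\<Sum>n=1..N. f n x) / real N) \<le> D" for N
      using abs_average_le[OF bound] by simp
  qed (use f lim in auto)
  then show ?thesis
    using int by (simp add: integral_sum)
qed

lemma lipschitz_on_infdist_cutoff:
  "(real k)-lipschitz_on UNIV (\<lambda>p. max 0 (1 - real k * infdist p C))"
proof (rule lipschitz_onI)
  fix p q :: 'a
  have "dist (max 0 (1 - real k * infdist p C)) (max 0 (1 - real k * infdist q C))
      \<le> \<bar>(1 - real k * infdist p C) - (1 - real k * infdist q C)\<bar>"
    by (auto simp: dist_real_def max_def)
  also have "\<dots> = real k * \<bar>infdist p C - infdist q C\<bar>"
    by (simp add: abs_mult right_diff_distrib[symmetric] abs_minus_commute)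
  also have "\<dots> \<le> real k * dist p q"
    by (intro mult_left_mono infdist_triangle_abs) simp
  finally show "dist (max 0 (1 - real k * infdist p C)) (max 0 (1 - real k * infdist q C))
      \<le> real k * dist p q" .
qed simp

lemma tendsto_infdist_cutoff_indicator:
  assumes "closed C" and "C \<noteq> {}"
  shows "(\<lambda>k. max 0 (1 - real k * infdist p C)) \<longlonglongrightarrow> indicator C p"
proof (cases "p \<in> C")
  case True
  then show ?thesis by simp
next
  case False
  then have pos: "infdist p C > 0"
    using in_closed_iff_infdist_zero[OF assms] infdist_nonneg[of p C] by fastforce
  obtain m :: nat where m: "1 / infdist p C \<le> real m"
    using real_arch_simple by blast
  have "max 0 (1 - real k * infdist p C) = indicator C p" if "m \<le> k" for k
  proof -
    have "1 / infdist p C \<le> real k"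
      using m that by linarith
    then have "1 \<le> real k * infdist p C"
      using pos by (simp add: field_simps)
    then show ?thesis
      using False by simp
  qed
  then show ?thesis
    by (intro tendsto_eventually eventually_sequentiallyI)
qed

lemma tendsto_integral_infdist_cutoff:
  fixes M :: "'a::metric_space measure"
  assumes "sets M = sets borel" and "finite_measure M" and "closed C" and "C \<noteq> {}"
  shows "(\<lambda>k. \<integral>p. max 0 (1 - real k * infdist p C) \<partial>M) \<longlonglongrightarrow> measure M C"
proof -
  interpret finite_measure M by fact
  have C: "C \<in> sets M"
    using assms(1,3) by simp
  have "(\<lambda>k. \<integral>p. max 0 (1 - real k * infdist p C) \<partial>M) \<longlonglongrightarrow> (\<integral>p. indicator C p \<partial>M)"
  proof (rule integral_dominated_convergence[where w = "\<lambda>_. 1"])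
    show "(\<lambda>p. max 0 (1 - real k * infdist p C)) \<in> borel_measurable M" for k
      by (intro borel_measurable_continuous_on_sets_borel[OF assms(1)] continuous_intros)
    show "AE p in M. norm (max 0 (1 - real k * infdist p C)) \<le> 1" for k
      using infdist_nonneg[of _ C] by (intro AE_I2) auto
  qed (use C tendsto_infdist_cutoff_indicator[OF assms(3,4)] in auto)
  then show ?thesis
    using C by simp
qed

lemma measure_eqI_lipschitz:
  fixes M1 M2 :: "'a::metric_space measure"
  assumes sets: "sets M1 = sets borel" "sets M2 = sets borel"
    and fin: "finite_measure M1" "finite_measure M2"
    and eq: "\<And>(g :: 'a \<Rightarrow> real) L. L-lipschitz_on UNIV g \<Longrightarrow> (\<And>x. \<bar>g x\<bar> \<le> 1) \<Longrightarrow>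
      integral\<^sup>L M1 g = integral\<^sup>L M2 g"
  shows "M1 = M2"
proof (rule measure_eqI_generator_eq[where E = "Collect closed" and \<Omega> = UNIV and A = "\<lambda>_. UNIV"])
  show "sets M1 = sigma_sets UNIV (Collect closed)" "sets M2 = sigma_sets UNIV (Collect closed)"
    using sets by (simp_all add: borel_eq_closed sets_measure_of)
  show "emeasure M1 UNIV \<noteq> \<infinity>" for i :: nat
    using finite_measure.emeasure_finite[OF fin(1)] sets_eq_imp_space_eq[OF sets(1)] by simp
  fix C :: "'a set"
  assume "C \<in> Collect closed"
  then have "closed C" by simp
  have "measure M1 C = measure M2 C"
  proof (cases "C = {}")
    case False
    have "\<bar>max 0 (1 - real k * infdist p C)\<bar> \<le> 1" for k p
      using infdist_nonneg[of p C] by auto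
    then have "(\<integral>p. max 0 (1 - real k * infdist p C) \<partial>M1) = (\<integral>p. max 0 (1 - real k * infdist p C) \<partial>M2)"
      for k
      by (rule eq[OF lipschitz_on_infdist_cutoff[of k C]])
    with tendsto_integral_infdist_cutoff[OF sets(1) fin(1) \<open>closed C\<close> False]
    have "(\<lambda>k. \<integral>p. max 0 (1 - real k * infdist p C) \<partial>M2) \<longlonglongrightarrow> measure M1 C"
      by simp
    then show ?thesis
      using tendsto_integral_infdist_cutoff[OF sets(2) fin(2) \<open>closed C\<close> False]
      by (rule LIMSEQ_unique)
  qed simp
  then show "emeasure M1 C = emeasure M2 C"
    by (simp add: finite_measure.emeasure_eq_measure[OF fin(1)]
        finite_measure.emeasure_eq_measure[OF fin(2)])
qed (auto simp: Int_stable_def)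

lemma skew_power:
  "(skew \<omega> ^^ n) (\<sigma>, x) = ((\<lambda>m. \<sigma> (m + n)), iter_comp \<omega> \<sigma> n x)"
  by (induction n) (auto simp: skew_def shift_def)

lemma dist_skew_power_same_fibre:
  "dist ((skew \<omega> ^^ n) (\<sigma>, x)) ((skew \<omega> ^^ n) (\<sigma>, y))
     = dist (iter_comp \<omega> \<sigma> n x) (iter_comp \<omega> \<sigma> n y)"
  by (simp add: skew_power dist_Pair_Pair)

lemma continuous_on_skew:
  fixes \<omega> :: "'l::topological_space \<Rightarrow> 'x::topological_space \<Rightarrow> 'x"
  assumes "continuous_on UNIV (\<lambda>(l, x). \<omega> l x)"
  shows "continuous_on UNIV (skew \<omega>)"
proof -
  have "continuous_on UNIV (\<lambda>p::(nat \<Rightarrow> 'l) \<times> 'x. (fst p 0, snd p))"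
    by (intro continuous_intros continuous_on_compose2[OF continuous_on_product_coordinates[of 0]]) auto
  from continuous_on_compose2[OF assms this]
  have "continuous_on UNIV (\<lambda>p::(nat \<Rightarrow> 'l) \<times> 'x. \<omega> (fst p 0) (snd p))"
    by simp
  moreover have shift: "continuous_on UNIV (shift :: (nat \<Rightarrow> 'l) \<Rightarrow> _)"
    unfolding shift_def by (intro continuous_on_coordinatewise_then_product) simp
  ultimately show ?thesis
    unfolding skew_def by (intro continuous_intros continuous_on_compose2[OF shift]) auto
qed

lemma continuous_on_skew_power:
  fixes \<omega> :: "'l::topological_space \<Rightarrow> 'x::topological_space \<Rightarrow> 'x"
  assumes "continuous_on UNIV (\<lambda>(l, x). \<omega> l x)"
  shows "continuous_on UNIV (skew \<omega> ^^ n)"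
proof (induction n)
  case (Suc n)
  with continuous_on_compose2[OF continuous_on_skew[OF assms]] show ?case
    by (simp add: comp_def)
qed (simp add: continuous_on_id)

lemma continuous_on_skew_power_fibre:
  fixes \<omega> :: "'l::metric_space \<Rightarrow> 'x::metric_space \<Rightarrow> 'x"
  assumes "continuous_on UNIV (\<lambda>(l, x). \<omega> l x)"
  shows "continuous_on UNIV (\<lambda>p::(nat \<Rightarrow> 'l) \<times> 'x. (skew \<omega> ^^ n) (fst p, x0))"
  using continuous_on_compose2[OF continuous_on_skew_power[OF assms], of UNIV "\<lambda>p. (fst p, x0)"]
  by (simp add: continuous_on_Pair continuous_on_fst continuous_on_id continuous_on_const)

lemma dist_skew_power_fibre_le_diameter:
  fixes \<omega> :: "'l::metric_space \<Rightarrow> 'x::metric_space \<Rightarrow> 'x"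
  assumes "bounded (UNIV :: 'x set)"
  shows "dist ((skew \<omega> ^^ n) p) ((skew \<omega> ^^ n) (fst p, x0)) \<le> diameter (UNIV :: 'x set)"
  by (cases p) (simp add: dist_skew_power_same_fibre diameter_bounded_bound[OF assms])

lemma Fset_average_fibre_dist_tendsto_zero:
  fixes \<omega> :: "'l::metric_space \<Rightarrow> 'x::metric_space \<Rightarrow> 'x"
  assumes "bounded (UNIV :: 'x set)" and "\<sigma> \<in> Fset \<omega>"
  shows "(\<lambda>N. (\<Sum>n=1..N. dist ((skew \<omega> ^^ n) (\<sigma>, x)) ((skew \<omega> ^^ n) (\<sigma>, y))) / real N)
           \<longlonglongrightarrow> 0"
proof (rule tendsto_sandwich[OF _ _ tendsto_const])
  show "(\<lambda>N. (\<Sum>n=1..N. diameter (range (iter_comp \<omega> \<sigma> n))) / real N) \<longlonglongrightarrow> 0"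
    using assms(2) by (simp add: Fset_def)
  have "dist ((skew \<omega> ^^ n) (\<sigma>, x)) ((skew \<omega> ^^ n) (\<sigma>, y)) \<le> diameter (range (iter_comp \<omega> \<sigma> n))"
    for n
    unfolding dist_skew_power_same_fibre
    by (intro diameter_bounded_bound bounded_subset[OF assms(1)]) auto
  then show "\<forall>\<^sub>F N in sequentially.
      (\<Sum>n=1..N. dist ((skew \<omega> ^^ n) (\<sigma>, x)) ((skew \<omega> ^^ n) (\<sigma>, y))) / real N
        \<le> (\<Sum>n=1..N. diameter (range (iter_comp \<omega> \<sigma> n))) / real N"
    by (intro always_eventually allI divide_right_mono sum_mono) auto
  show "\<forall>\<^sub>F N in sequentially.
      0 \<le> (\<Sum>n=1..N. dist ((skew \<omega> ^^ n) (\<sigma>, x)) ((skew \<omega> ^^ n) (\<sigma>, y))) / real N"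
    by (intro always_eventually allI divide_nonneg_nonneg sum_nonneg zero_le_dist) auto
qed

lemma integral_skew_power_fibre_diff_le:
  fixes \<omega> :: "'l::metric_space \<Rightarrow> 'x::metric_space \<Rightarrow> 'x"
    and \<mu> :: "((nat \<Rightarrow> 'l) \<times> 'x) measure" and g :: "(nat \<Rightarrow> 'l) \<times> 'x \<Rightarrow> real"
  assumes cont: "continuous_on UNIV (\<lambda>(l, x). \<omega> l x)" and X: "bounded (UNIV :: 'x set)"
    and sets: "sets \<mu> = sets borel" and fin: "finite_measure \<mu>"
    and inv: "distr \<mu> borel (skew \<omega>) = \<mu>"
    and lip: "L-lipschitz_on UNIV g" and bound: "\<And>p. \<bar>g p\<bar> \<le> B"
  shows "\<bar>integral\<^sup>L \<mu> g - (\<integral>\<sigma>. g ((skew \<omega> ^^ n) (\<sigma>, x0)) \<partial>distr \<mu> borel fst)\<bar>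
           \<le> L * (\<integral>p. dist ((skew \<omega> ^^ n) p) ((skew \<omega> ^^ n) (fst p, x0)) \<partial>\<mu>)"
proof -
  define T where "T = skew \<omega> ^^ n"
  define h where "h p = g (T (fst p, x0))" for p :: "(nat \<Rightarrow> 'l) \<times> 'x"
  have T: "continuous_on UNIV T"
    unfolding T_def by (rule continuous_on_skew_power[OF cont])
  have g: "continuous_on UNIV g"
    using lip by (rule lipschitz_on_continuous_on)
  have fibre: "continuous_on UNIV (\<lambda>p::(nat \<Rightarrow> 'l) \<times> 'x. T (fst p, x0))"
    unfolding T_def by (rule continuous_on_skew_power_fibre[OF cont])
  have gT: "continuous_on UNIV (g \<circ> T)" and h: "continuous_on UNIV h"
    unfolding h_def comp_def
    using continuous_on_compose2[OF g T] continuous_on_compose2[OF g fibre] by simp_all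
  have "integral\<^sup>L \<mu> g = (\<integral>p. g (T p) \<partial>\<mu>)"
    unfolding T_def using borel_measurable_continuous_on_sets_borel[OF refl]
    by (metis integral_funpow_invariant[OF sets _ inv] continuous_on_skew[OF cont] g)
  moreover have "(\<integral>\<sigma>. g (T (\<sigma>, x0)) \<partial>distr \<mu> borel fst) = integral\<^sup>L \<mu> h"
    unfolding h_def
    by (intro integral_distr borel_measurable_continuous_on_sets_borel[OF sets] continuous_on_fst
        borel_measurable_continuous_onI continuous_on_compose2[OF g] continuous_on_compose2[OF T])
      (auto intro: continuous_intros)
  moreover have ints: "integrable \<mu> (g \<circ> T)"
    by (rule integrable_bounded_continuous_on[OF sets fin gT, where B = B]) (simp add: bound)
  moreover have inth: "integrable \<mu> h"
    by (rule integrable_bounded_continuous_on[OF sets fin h, where B = B]) (simp add: h_def bound)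
  moreover have intd: "integrable \<mu> (\<lambda>p. dist (T p) (T (fst p, x0)))"
  proof (rule integrable_bounded_continuous_on[OF sets fin])
    show "continuous_on UNIV (\<lambda>p. dist (T p) (T (fst p, x0)))"
      using continuous_on_dist[OF T fibre] .
    show "norm (dist (T p) (T (fst p, x0))) \<le> diameter (UNIV :: 'x set)" for p
      unfolding T_def using dist_skew_power_fibre_le_diameter[OF X] by simp
  qed
  ultimately have "\<bar>integral\<^sup>L \<mu> g - (\<integral>\<sigma>. g (T (\<sigma>, x0)) \<partial>distr \<mu> borel fst)\<bar>
      = \<bar>\<integral>p. g (T p) - h p \<partial>\<mu>\<bar>"
    by (simp add: comp_def)
  also have "\<dots> \<le> (\<integral>p. \<bar>g (T p) - h p\<bar> \<partial>\<mu>)"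
    by (rule integral_abs_bound)
  also have "\<dots> \<le> (\<integral>p. L * dist (T p) (T (fst p, x0)) \<partial>\<mu>)"
    using ints inth intd lipschitz_onD[OF lip] unfolding h_def dist_real_def
    by (intro integral_mono) (auto simp: comp_def)
  finally show ?thesis
    unfolding T_def by simp
qed

lemma tendsto_fibre_average_integral:
  fixes \<omega> :: "'l::metric_space \<Rightarrow> 'x::metric_space \<Rightarrow> 'x"
    and \<mu> :: "((nat \<Rightarrow> 'l) \<times> 'x) measure" and g :: "(nat \<Rightarrow> 'l) \<times> 'x \<Rightarrow> real"
  assumes cont: "continuous_on UNIV (\<lambda>(l, x). \<omega> l x)" and X: "bounded (UNIV :: 'x set)"
    and sets: "sets \<mu> = sets borel" and fin: "finite_measure \<mu>"
    and inv: "distr \<mu> borel (skew \<omega>) = \<mu>" and F: "AE p in \<mu>. fst p \<in> Fset \<omega>"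
    and lip: "L-lipschitz_on UNIV g" and bound: "\<And>p. \<bar>g p\<bar> \<le> B"
  shows "(\<lambda>N. (\<Sum>n=1..N. \<integral>\<sigma>. g ((skew \<omega> ^^ n) (\<sigma>, x0)) \<partial>distr \<mu> borel fst) / real N)
           \<longlonglongrightarrow> integral\<^sup>L \<mu> g"
proof -
  define I where "I n = (\<integral>\<sigma>. g ((skew \<omega> ^^ n) (\<sigma>, x0)) \<partial>distr \<mu> borel fst)" for n
  define d where "d n p = dist ((skew \<omega> ^^ n) p) ((skew \<omega> ^^ n) (fst p, x0))" for n p
  have "(\<lambda>N. (\<Sum>n=1..N. integral\<^sup>L \<mu> (d n)) / real N) \<longlonglongrightarrow> 0"
  proof (rule integral_average_tendsto_zero[OF fin])
    show "d n \<in> borel_measurable \<mu>" for n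
      unfolding d_def
      by (intro borel_measurable_continuous_on_sets_borel[OF sets] continuous_on_dist
          continuous_on_skew_power[OF cont] continuous_on_skew_power_fibre[OF cont])
    show "\<bar>d n p\<bar> \<le> diameter (UNIV :: 'x set)" for n p
      unfolding d_def using dist_skew_power_fibre_le_diameter[OF X] by simp
    show "AE p in \<mu>. (\<lambda>N. (\<Sum>n=1..N. d n p) / real N) \<longlonglongrightarrow> 0"
      using F
    proof eventually_elim
      case (elim p)
      then show ?case
        using Fset_average_fibre_dist_tendsto_zero[OF X elim, of "snd p" x0]
        unfolding d_def by simp
    qed
  qed
  then have "(\<lambda>N. L * ((\<Sum>n=1..N. integral\<^sup>L \<mu> (d n)) / real N)) \<longlonglongrightarrow> 0"
    by (rule tendsto_mult_right_zero)
  moreover have "\<forall>\<^sub>F N in sequentially. norm ((\<Sum>n=1..N. I n) / real N - integral\<^sup>L \<mu> g)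
      \<le> L * ((\<Sum>n=1..N. integral\<^sup>L \<mu> (d n)) / real N)"
    using eventually_ge_at_top[of 1]
  proof eventually_elim
    case (elim N)
    have "(\<Sum>n=1..N. I n) / real N - integral\<^sup>L \<mu> g = (\<Sum>n=1..N. I n - integral\<^sup>L \<mu> g) / real N"
      using elim by (simp add: sum_subtractf diff_divide_distrib)
    also have "\<bar>\<dots>\<bar> \<le> (\<Sum>n=1..N. \<bar>integral\<^sup>L \<mu> g - I n\<bar>) / real N"
      using sum_abs[of "\<lambda>n. I n - integral\<^sup>L \<mu> g" "{1..N}"]
      by (simp add: abs_divide abs_minus_commute divide_right_mono)
    also have "\<dots> \<le> (\<Sum>n=1..N. L * integral\<^sup>L \<mu> (d n)) / real N"
      unfolding I_def d_def
      by (intro divide_right_mono sum_mono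
          integral_skew_power_fibre_diff_le[OF cont X sets fin inv lip bound]) simp
    finally show ?case
      by (simp add: sum_distrib_left)
  qed
  ultimately have "(\<lambda>N. (\<Sum>n=1..N. I n) / real N - integral\<^sup>L \<mu> g) \<longlonglongrightarrow> 0"
    by (rule Lim_null_comparison[rotated])
  then show ?thesis
    unfolding I_def by (rule LIM_zero_cancel)
qed

theorem proposition1:
  fixes \<omega> :: "'l::metric_space \<Rightarrow> 'x::metric_space \<Rightarrow> 'x"
    and \<mu>1 \<mu>2 :: "((nat \<Rightarrow> 'l) \<times> 'x) measure"
    and \<nu> :: "(nat \<Rightarrow> 'l) measure"
  assumes "compact (UNIV :: 'x set)" and "compact (UNIV :: 'l set)"
    and "continuous_on UNIV (\<lambda>(l, x). \<omega> l x)"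
    and "sets \<mu>1 = sets borel" and "prob_space \<mu>1"
    and "sets \<mu>2 = sets borel" and "prob_space \<mu>2"
    and "\<forall>A \<in> sets borel. emeasure \<mu>1 (skew \<omega> -` A) = emeasure \<mu>1 A"
    and "\<forall>A \<in> sets borel. emeasure \<mu>2 (skew \<omega> -` A) = emeasure \<mu>2 A"
    and "sets \<nu> = sets borel" and "prob_space \<nu>"
    and "emeasure \<nu> (Fset \<omega>) = 1"
    and "distr \<mu>1 borel fst = \<nu>" and "distr \<mu>2 borel fst = \<nu>"
  shows "\<mu>1 = \<mu>2"
proof -
  note cont = assms(3)
  have X: "bounded (UNIV :: 'x set)"
    using assms(1) by (rule compact_imp_bounded)
  have invariant: "distr \<mu> borel (skew \<omega>) = \<mu>"
    if "sets \<mu> = sets borel" "\<forall>A \<in> sets borel. emeasure \<mu> (skew \<omega> -` A) = emeasure \<mu> A" for \<mu>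
    using that
    by (intro distr_eq_if_emeasure_vimage_eq borel_measurable_continuous_on_sets_borel
        continuous_on_skew[OF cont])
  have F: "AE p in \<mu>. fst p \<in> Fset \<omega>" if "sets \<mu> = sets borel" "distr \<mu> borel fst = \<nu>" for \<mu>
    using that assms(11,12)
    by (intro AE_in_if_distr_emeasure_eq_1[where N = borel] borel_measurable_continuous_on_sets_borel
        continuous_on_fst continuous_on_id) simp_all
  have fin: "finite_measure \<mu>1" "finite_measure \<mu>2"
    using assms(5,7) by (simp_all add: prob_space.finite_measure)
  show ?thesis
  proof (rule measure_eqI_lipschitz[OF assms(4,6) fin])
    fix g :: "(nat \<Rightarrow> 'l) \<times> 'x \<Rightarrow> real" and L
    assume "L-lipschitz_on UNIV g" "\<And>p. \<bar>g p\<bar> \<le> 1"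
    note average = tendsto_fibre_average_integral[OF cont X _ _ _ _ this, of _ undefined]
    have "(\<lambda>N. (\<Sum>n=1..N. \<integral>\<sigma>. g ((skew \<omega> ^^ n) (\<sigma>, undefined)) \<partial>\<nu>) / real N)
        \<longlonglongrightarrow> integral\<^sup>L \<mu>1 g"
      using average[OF assms(4) fin(1) invariant[OF assms(4,8)] F[OF assms(4,13)]] assms(13) by simp
    moreover have "(\<lambda>N. (\<Sum>n=1..N. \<integral>\<sigma>. g ((skew \<omega> ^^ n) (\<sigma>, undefined)) \<partial>\<nu>) / real N)
        \<longlonglongrightarrow> integral\<^sup>L \<mu>2 g"
      using average[OF assms(6) fin(2) invariant[OF assms(6,9)] F[OF assms(6,14)]] assms(14) by simp
    ultimately show "integral\<^sup>L \<mu>1 g = integral\<^sup>L \<mu>2 g"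
      by (rule LIMSEQ_unique)
  qed
qed

end
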